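(* Consider the following cooperative multi-player multi-armed bandit problem ("Problem B'"). There are $M$ players; player $P_i$ has arms $\mathcal{K}_i=\{1,\dots,K_i\}$. At each round $t$ each player picks $a_i(t)\in\mathcal{K}_i$, forming the tuple $a(t)=(a_1(t),\dots,a_M(t))$, which is observed by all players. For each tuple $a$ there is an unknown $1$-subgaussian distribution $F_a$ on $[0,1]$ with mean $\mu_a$; at round $t$ each player $i$ receives and observes only its own reward $X^i_{a(t)}(t)\sim F_{a(t)}$, the rewards being independent across players and rounds. Let $\mu^*=\max_a\mu_a$ and define player $i$'s expected regret $R_T=\mathbb{E}\big[T\mu^*-\sum_{t=1}^T X^i_{a(t)}(t)\big]$. Suppose every player runs \texttt{mUCB} using its own rewards: in the first $K_1\cdots K_M$ rounds, player $P_i$ starts at its arm $1$ and successively pulls each of its arms $K_{i+1}\cdots K_M$ consecutive times, repeating this epoch $K_1\cdots K_{i-1}$ times (so every tuple is played once); afterwards, at round $t$, player $i$ computes for each tuple $a$ the index $\eta^i_a(t)=\infty$ if $n_a(t)=0$ and otherwise $\eta^i_a(t)=\hat\mu^i_a(t)+\sqrt{2\log(1/\delta)/n_a(t)}$ with $\delta=1/t^2$, where $n_a(t)$ is the number of times tuple $a$ was played in the first $t$ rounds and $\hat\mu^i_a(t)$ is the average of player $i$'s own rewards from those rounds, and plays the $i$-th component of a tuple maximizing $\eta^i_a(t)$, ties broken in favour of the lexicographically smallest tuple. Then there exists an instance of this problem (choice of $M$, $K_1,\dots,K_M$ and distributions $F_a$) for which the expected regret grows linearly in $T$, i.e. there is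 a constant $c>0$ with $R_T\ge cT$ for all sufficiently large $T$.
   Context: Lexicographic order: $(x_1,\dots,x_M)<(y_1,\dots,y_M)$ iff there is $n$ with $x_j=y_j$ for all $j<n$ and $x_n<y_n$. Since rewards of all players are identically distributed, the expected regret is the same for every player. *)

theory Defs
  imports "HOL-Probability.Probability"
begin

text \<open>Players are indexed 0..M-1 (paper: 1..M); arm sets are {1..K i}.
  Arm tuples are lists of length M.\<close>

definition tuples :: "(nat \<Rightarrow> nat) \<Rightarrow> nat \<Rightarrow> nat list set" where
  "tuples K M = {a. length a = M \<and> (\<forall>i<M. 1 \<le> a ! i \<and> a ! i \<le> K i)}"

definition lex_less :: "nat list \<Rightarrow> nat list \<Rightarrow> bool" where
  "lex_less x y \<longleftrightarrow>
     (\<exists>n < min (length x) (length y). (\<forall>j<n. x ! j = y ! j) \<and> x ! n < y ! n)"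

definition n_init :: "(nat \<Rightarrow> nat) \<Rightarrow> nat \<Rightarrow> nat" where
  "n_init K M = (\<Prod>i<M. K i)"

definition init_tuple :: "(nat \<Rightarrow> nat) \<Rightarrow> nat \<Rightarrow> nat \<Rightarrow> nat list" where
  "init_tuple K M r = map (\<lambda>i. ((r - 1) div (\<Prod>j\<in>{i<..<M}. K j)) mod K i + 1) [0..<M]"

text \<open>A history h is the list of tuples played in rounds 1..length h (h!s is round s+1).
  A reward table \<omega> gives \<omega> (i, s, a) = reward player i would get in round s if tuple a is played.\<close>

definition play_count :: "nat list list \<Rightarrow> nat list \<Rightarrow> nat" where
  "play_count h a = length (filter (\<lambda>b. b = a) h)"

definition own_mean :: "(nat \<times> nat \<times> nat list \<Rightarrow> real) \<Rightarrow> nat \<Rightarrow> nat list list \<Rightarrow> nat list \<Rightarrow> real" where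
  "own_mean \<omega> i h a =
     (\<Sum>s<length h. if h ! s = a then \<omega> (i, Suc s, a) else 0) / real (play_count h a)"

definition mucb_delta :: "nat \<Rightarrow> real" where
  "mucb_delta t = 1 / (real t) ^ 2"

definition mucb_index :: "(nat \<times> nat \<times> nat list \<Rightarrow> real) \<Rightarrow> nat \<Rightarrow> nat list list \<Rightarrow> nat list \<Rightarrow> ereal" where
  "mucb_index \<omega> i h a =
     (if play_count h a = 0 then PInfty
      else ereal (own_mean \<omega> i h a
             + sqrt (2 * ln (1 / mucb_delta (length h)) / real (play_count h a))))"

definition lex_argmax :: "nat list set \<Rightarrow> (nat list \<Rightarrow> ereal) \<Rightarrow> nat list" where
  "lex_argmax A f =
     (THE a. a \<in> A \<and> (\<forall>b\<in>A. f b \<le> f a) \<and>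
        (\<forall>b\<in>A. (\<forall>c\<in>A. f c \<le> f b) \<longrightarrow> b \<noteq> a \<longrightarrow> lex_less a b))"

definition next_tuple :: "(nat \<Rightarrow> nat) \<Rightarrow> nat \<Rightarrow> (nat \<times> nat \<times> nat list \<Rightarrow> real) \<Rightarrow> nat list list \<Rightarrow> nat list" where
  "next_tuple K M \<omega> h =
     (if length h < n_init K M then init_tuple K M (Suc (length h))
      else map (\<lambda>i. lex_argmax (tuples K M) (mucb_index \<omega> i h) ! i) [0..<M])"

primrec mucb_history :: "(nat \<Rightarrow> nat) \<Rightarrow> nat \<Rightarrow> (nat \<times> nat \<times> nat list \<Rightarrow> real) \<Rightarrow> nat \<Rightarrow> nat list list" where
  "mucb_history K M \<omega> 0 = []"
| "mucb_history K M \<omega> (Suc t) =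
     mucb_history K M \<omega> t @ [next_tuple K M \<omega> (mucb_history K M \<omega> t)]"

definition reward_sum :: "(nat \<Rightarrow> nat) \<Rightarrow> nat \<Rightarrow> (nat \<times> nat \<times> nat list \<Rightarrow> real) \<Rightarrow> nat \<Rightarrow> nat \<Rightarrow> real" where
  "reward_sum K M \<omega> i T = (\<Sum>s<T. \<omega> (i, Suc s, mucb_history K M \<omega> T ! s))"

definition reward_space :: "(nat \<Rightarrow> nat) \<Rightarrow> nat \<Rightarrow> (nat list \<Rightarrow> real measure) \<Rightarrow> nat
    \<Rightarrow> (nat \<times> nat \<times> nat list \<Rightarrow> real) measure" where
  "reward_space K M F T = PiM ({..<M} \<times> {1..T} \<times> tuples K M) (\<lambda>(i, s, a). F a)"

definition arm_mean :: "real measure \<Rightarrow> real" where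
  "arm_mean D = (\<integral>x. x \<partial>D)"

definition mu_star :: "(nat \<Rightarrow> nat) \<Rightarrow> nat \<Rightarrow> (nat list \<Rightarrow> real measure) \<Rightarrow> real" where
  "mu_star K M F = Max ((\<lambda>a. arm_mean (F a)) ` tuples K M)"

definition expected_regret :: "(nat \<Rightarrow> nat) \<Rightarrow> nat \<Rightarrow> (nat list \<Rightarrow> real measure) \<Rightarrow> nat \<Rightarrow> nat \<Rightarrow> real" where
  "expected_regret K M F i T =
     real T * mu_star K M F - (\<integral>\<omega>. reward_sum K M \<omega> i T \<partial>reward_space K M F T)"

definition one_subgaussian :: "real measure \<Rightarrow> bool" where
  "one_subgaussian D \<longleftrightarrow>
     (\<forall>l::real. integrable D (\<lambda>x. exp (l * (x - arm_mean D))) \<and>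
        (\<integral>x. exp (l * (x - arm_mean D)) \<partial>D) \<le> exp (l ^ 2 / 2))"

end

theory Submission
  imports Defs "HOL-Library.List_Lexorder" "HOL-Probability.Hoeffding"
begin

text \<open>
  Take two players with two arms each, let tuple [1,1] always pay 0, tuples [2,1] and [2,2]
  always pay 1, and let [1,2] pay a fair coin; by Hoeffding's lemma all four distributions are
  1-subgaussian. With probability 1/4 the coin shows 1 to player 0 and 0 to player 1 in round 2.
  After the initialisation player 0 then sees the index 1 + r on [1,2], [2,1] and [2,2], and
  lexicographic tie-breaking makes it choose [1,2], i.e. arm 1; player 1 sees r on [1,2] and
  1 + r on [2,1] and [2,2], so it chooses [2,1], i.e. also arm 1. The tuple [1,1] is played, its
  empirical mean stays 0 and its index only decreases, so the same choices repeat forever. On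
  this event the reward is at most 4 while the optimal reward is T, so the expected regret is at
  least (T - 4)/4.
\<close>

section \<open>Lexicographic tie-breaking\<close>

lemma lex_less_iff_less:
  assumes "length x = length y"
  shows "lex_less x y \<longleftrightarrow> x < y"
  unfolding lex_less_def list_less_def lexord_take_index_conv
  using assms by (auto simp: list_eq_iff_nth_eq min_def not_le)

lemma maximisers_nonempty:
  fixes f :: "'a \<Rightarrow> 'b::linorder"
  assumes "finite A" "A \<noteq> {}"
  shows "{a\<in>A. \<forall>b\<in>A. f b \<le> f a} \<noteq> {}"
proof -
  have "Max (f ` A) \<in> f ` A"
    using assms by (intro Max_in) auto
  then obtain a where "a \<in> A" "Max (f ` A) = f a"
    by (rule imageE)
  moreover have "f b \<le> Max (f ` A)" if "b \<in> A" for b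
    using assms(1) that by simp
  ultimately show ?thesis
    by auto
qed

lemma lex_argmax_eq_Min:
  fixes f :: "nat list \<Rightarrow> ereal"
  assumes "finite A" "A \<noteq> {}" "\<And>a. a \<in> A \<Longrightarrow> length a = n"
  shows "lex_argmax A f = Min {a\<in>A. \<forall>b\<in>A. f b \<le> f a}"
proof -
  define S where "S = {a\<in>A. \<forall>b\<in>A. f b \<le> f a}"
  define m where "m = Min S"
  have "finite S" "S \<noteq> {}"
    using assms(1) maximisers_nonempty[OF assms(1,2)] by (simp_all add: S_def)
  then have m: "m \<in> S" "\<And>b. b \<in> S \<Longrightarrow> m \<le> b"
    unfolding m_def by (auto intro: Min_in Min_le)
  have lex_less_S: "lex_less x y \<longleftrightarrow> x < y" if "x \<in> S" "y \<in> S" for x y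
    using that assms(3) by (intro lex_less_iff_less) (simp add: S_def)
  have "lex_argmax A f = m"
    unfolding lex_argmax_def
  proof (rule the_equality)
    have "lex_less m b" if "b \<in> S" "b \<noteq> m" for b
      using m that lex_less_S by (simp add: order.strict_iff_order)
    then show "m \<in> A \<and> (\<forall>b\<in>A. f b \<le> f m) \<and> (\<forall>b\<in>A. (\<forall>c\<in>A. f c \<le> f b) \<longrightarrow> b \<noteq> m \<longrightarrow> lex_less m b)"
      using m(1) unfolding S_def by blast
  next
    fix x
    assume x: "x \<in> A \<and> (\<forall>b\<in>A. f b \<le> f x) \<and> (\<forall>b\<in>A. (\<forall>c\<in>A. f c \<le> f b) \<longrightarrow> b \<noteq> x \<longrightarrow> lex_less x b)"
    then have "x \<in> S" unfolding S_def by blast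
    show "x = m"
    proof (rule ccontr)
      assume "x \<noteq> m"
      then have "lex_less x m" using x m(1) unfolding S_def by blast
      then have "x < m" using lex_less_S \<open>x \<in> S\<close> m(1) by simp
      then show False using m(2)[OF \<open>x \<in> S\<close>] by simp
    qed
  qed
  then show ?thesis by (simp add: m_def S_def)
qed

lemma lex_argmax_first_maximiser:
  fixes f :: "nat list \<Rightarrow> ereal"
  assumes "finite A" "A \<noteq> {}" "\<And>a. a \<in> A \<Longrightarrow> length a = n"
  shows "lex_argmax A f \<in> A \<and> (\<forall>b\<in>A. f b \<le> f (lex_argmax A f))
           \<and> (\<forall>b\<in>A. b < lex_argmax A f \<longrightarrow> f b < f (lex_argmax A f))"
proof -
  define S where "S = {a\<in>A. \<forall>b\<in>A. f b \<le> f a}"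
  have "finite S" "S \<noteq> {}"
    using assms(1) maximisers_nonempty[OF assms(1,2)] by (simp_all add: S_def)
  then have m: "Min S \<in> S" "\<And>b. b \<in> S \<Longrightarrow> Min S \<le> b"
    by auto
  moreover have "f b < f (Min S)" if "b \<in> A" "b < Min S" for b
  proof (rule ccontr)
    assume "\<not> f b < f (Min S)"
    then have "b \<in> S" using m(1) that(1) unfolding S_def by fastforce
    then show False using m(2) that(2) by fastforce
  qed
  ultimately show ?thesis
    using lex_argmax_eq_Min[OF assms, of f] unfolding S_def by auto
qed

lemma lex_argmax_eqI:
  fixes f :: "nat list \<Rightarrow> ereal"
  assumes "finite A" "\<And>a. a \<in> A \<Longrightarrow> length a = n"
    and "a \<in> A" "\<And>b. b \<in> A \<Longrightarrow> f b \<le> f a" "\<And>b. b \<in> A \<Longrightarrow> b < a \<Longrightarrow> f b < f a"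
  shows "lex_argmax A f = a"
proof -
  let ?m = "lex_argmax A f"
  have m: "?m \<in> A" "\<forall>b\<in>A. f b \<le> f ?m" "\<forall>b\<in>A. b < ?m \<longrightarrow> f b < f ?m"
    using lex_argmax_first_maximiser[OF assms(1) _ assms(2)] assms(3) by blast+
  show ?thesis
  proof (rule ccontr)
    assume "?m \<noteq> a"
    then consider "?m < a" | "a < ?m" by (meson neqE)
    then show False
    proof cases
      case 1
      then show False using m(1,2) assms(3,5) by (meson leD)
    next
      case 2
      then show False using m(1,3) assms(3,4) by (meson leD)
    qed
  qed
qed

lemma lex_argmax_eq_iff:
  fixes f :: "nat list \<Rightarrow> ereal"
  assumes "finite A" "A \<noteq> {}" "\<And>a. a \<in> A \<Longrightarrow> length a = n"
  shows "lex_argmax A f = a \<longleftrightarrow> a \<in> A \<and> (\<forall>b\<in>A. f b \<le> f a) \<and> (\<forall>b\<in>A. b < a \<longrightarrow> f b < f a)"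
  using lex_argmax_first_maximiser[OF assms] lex_argmax_eqI[OF assms(1,3)] by blast

lemma measurable_lex_argmax:
  fixes g :: "'a \<Rightarrow> nat list \<Rightarrow> ereal"
  assumes "finite A" "A \<noteq> {}" "\<And>a. a \<in> A \<Longrightarrow> length a = n"
    and [measurable]: "\<And>a. a \<in> A \<Longrightarrow> (\<lambda>x. g x a) \<in> borel_measurable M"
  shows "(\<lambda>x. lex_argmax A (g x)) \<in> measurable M (count_space UNIV)"
  unfolding measurable_count_space_eq2_countable
proof (intro conjI ballI)
  fix a
  have "(\<lambda>x. lex_argmax A (g x)) -` {a} \<inter> space M =
      {x\<in>space M. a \<in> A \<and> (\<forall>b\<in>A. g x b \<le> g x a) \<and> (\<forall>b\<in>A. b < a \<longrightarrow> g x b < g x a)}"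
    using lex_argmax_eq_iff[OF assms(1-3)] by auto
  also have "\<dots> \<in> sets M"
  proof (cases "a \<in> A")
    case True
    then show ?thesis using assms(1) by measurable
  qed simp
  finally show "(\<lambda>x. lex_argmax A (g x)) -` {a} \<inter> space M \<in> sets M" .
qed simp


lemma measurable_map_count_space:
  fixes f :: "'a \<Rightarrow> 'i \<Rightarrow> 'b::countable"
  assumes "\<And>i. i \<in> set xs \<Longrightarrow> (\<lambda>x. f x i) \<in> measurable M (count_space UNIV)"
  shows "(\<lambda>x. map (f x) xs) \<in> measurable M (count_space UNIV)"
  using assms
proof (induction xs)
  case Nil
  then show ?case by simp
next
  case (Cons i xs)
  have "(\<lambda>x. map (f x) xs) \<in> measurable M (count_space UNIV)"
    using Cons by simp
  then have "(\<lambda>x. c # map (f x) xs) \<in> measurable M (count_space UNIV)" for c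
    by (rule measurable_compose) simp
  then have "(\<lambda>x. (\<lambda>c x. c # map (f x) xs) (f x i) x) \<in> measurable M (count_space UNIV)"
    by (rule measurable_compose_countable) (simp add: Cons.prems)
  then show ?case by simp
qed

lemma one_subgaussian_if_AE_interval:
  fixes D :: "real measure"
  assumes D: "prob_space D" "sets D = sets borel"
    and AE_bounded: "AE x in D. x \<in> {a..b}" and width: "a \<le> b" "b - a \<le> 2"
  shows "one_subgaussian D"
proof -
  interpret prob_space D by (fact D)
  have [measurable]: "(\<lambda>x. x) \<in> borel_measurable D"
    by (rule measurable_ident_sets) (fact D)
  interpret X: interval_bounded_random_variable D "\<lambda>x. x" a b
    by unfold_locales (use AE_bounded in simp_all)
  interpret negX: interval_bounded_random_variable D "\<lambda>x. - x" "- b" "- a"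
    by unfold_locales (auto intro: eventually_mono[OF AE_bounded])
  define \<mu> where "\<mu> = arm_mean D"
  have mgf: "(\<integral>\<^sup>+x. ennreal (exp (l * (x - \<mu>))) \<partial>D) \<le> ennreal (exp (l\<^sup>2 * (b - a)\<^sup>2 / 8))" for l
  proof (cases l "0 :: real" rule: linorder_cases)
    \<comment> \<open>Hoeffding's lemma is stated for positive l only; for negative l apply it to -x.\<close>
    case less
    then show ?thesis
      using negX.Hoeffdings_lemma_nn_integral[of "- l"] by (simp add: \<mu>_def arm_mean_def algebra_simps)
  next
    case equal
    then show ?thesis by (simp add: emeasure_space_1)
  next
    case greater
    then show ?thesis
      using X.Hoeffdings_lemma_nn_integral[of l] by (simp add: \<mu>_def arm_mean_def)
  qed
  have "(b - a)\<^sup>2 \<le> 2\<^sup>2"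
    using width by (intro power_mono) auto
  then have exponent: "l\<^sup>2 * (b - a)\<^sup>2 / 8 \<le> l\<^sup>2 / 2" for l :: real
    by (simp add: mult_left_mono)
  show ?thesis
    unfolding one_subgaussian_def \<mu>_def[symmetric]
  proof (intro allI conjI)
    fix l :: real
    show "integrable D (\<lambda>x. exp (l * (x - \<mu>)))"
      using mgf[of l] by (intro integrableI_nonneg) (auto intro: le_less_trans)
    have "(\<integral>x. exp (l * (x - \<mu>)) \<partial>D) = enn2real (\<integral>\<^sup>+x. ennreal (exp (l * (x - \<mu>))) \<partial>D)"
      by (rule integral_eq_nn_integral) auto
    also have "\<dots> \<le> exp (l\<^sup>2 * (b - a)\<^sup>2 / 8)"
      using mgf[of l] by (intro enn2real_leI) auto
    also have "\<dots> \<le> exp (l\<^sup>2 / 2)"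
      using exponent by simp
    finally show "(\<integral>x. exp (l * (x - \<mu>)) \<partial>D) \<le> exp (l\<^sup>2 / 2)" .
  qed
qed

text \<open>The measure of a pmf carries the discrete \<sigma>-algebra, whereas reward distributions must be Borel.\<close>
definition pmf_borel :: "real pmf \<Rightarrow> real measure" where
  "pmf_borel p = distr (measure_pmf p) borel (\<lambda>x. x)"

lemma sets_pmf_borel [simp]: "sets (pmf_borel p) = sets borel"
  by (simp add: pmf_borel_def)

lemma prob_space_pmf_borel: "prob_space (pmf_borel p)"
  unfolding pmf_borel_def by (rule prob_space.prob_space_distr) (auto simp: prob_space_measure_pmf)

lemma AE_pmf_borel: "AE x in pmf_borel p. x \<in> set_pmf p"
proof -
  have "set_pmf p \<in> sets borel"
    by (rule sets.countable) auto
  then show ?thesis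
    unfolding pmf_borel_def by (subst AE_distr_iff) (auto simp: AE_measure_pmf)
qed

lemma measure_pmf_borel_singleton: "measure (pmf_borel p) {x} = pmf p x"
  unfolding pmf_borel_def by (subst measure_distr) (auto simp: measure_pmf_single)

lemma arm_mean_pmf_borel: "arm_mean (pmf_borel p) = measure_pmf.expectation p (\<lambda>x. x)"
  unfolding arm_mean_def pmf_borel_def by (subst integral_distr) auto

lemma measure_PiM_two_components:
  assumes "\<And>k. k \<in> I \<Longrightarrow> prob_space (M k)" "i \<in> I" "j \<in> I" "i \<noteq> j"
    and "A \<in> sets (M i)" "B \<in> sets (M j)"
  shows "measure (PiM I M) {\<omega> \<in> space (PiM I M). \<omega> i \<in> A \<and> \<omega> j \<in> B}
           = measure (M i) A * measure (M j) B"
proof -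
  define C where "C k = (if k = i then A else B)" for k
  have "{\<omega> \<in> space (PiM I M). \<omega> i \<in> A \<and> \<omega> j \<in> B} = prod_emb I M {i, j} (PiE {i, j} C)"
  proof -
    have "restrict \<omega> {i, j} \<in> PiE {i, j} C \<longleftrightarrow> \<omega> i \<in> A \<and> \<omega> j \<in> B" for \<omega> :: "_ \<Rightarrow> _"
      using assms(4) by (simp add: PiE_iff C_def)
    then show ?thesis
      unfolding prod_emb_def space_PiM by blast
  qed
  moreover have "emeasure (PiM I M) (prod_emb I M {i, j} (PiE {i, j} C))
                   = emeasure (M i) A * emeasure (M j) B"
    using assms by (subst emeasure_PiM_emb) (auto simp: C_def)
  moreover have "emeasure (M k) X = ennreal (measure (M k) X)" if "k \<in> I" for k X
  proof -
    interpret prob_space "M k" using assms(1)[OF that] .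
    show ?thesis by (rule emeasure_eq_measure)
  qed
  ultimately have "emeasure (PiM I M) {\<omega> \<in> space (PiM I M). \<omega> i \<in> A \<and> \<omega> j \<in> B}
                     = ennreal (measure (M i) A * measure (M j) B)"
    using assms(2,3) by (simp add: ennreal_mult)
  then show ?thesis
    by (simp add: measure_def)
qed

lemma (in prob_space) expectation_le_if_small_on_event:
  assumes "integrable M X" "E \<in> events"
    and "AE x in M. X x \<le> B" "AE x in M. x \<in> E \<longrightarrow> X x \<le> b" "b \<le> B"
  shows "expectation X \<le> B - (B - b) * prob E"
proof -
  have indicator: "integrable M (indicator E :: _ \<Rightarrow> real)"
    using assms(2) by (simp add: integrable_real_indicator emeasure_eq_measure)
  have "AE x in M. X x \<le> B - (B - b) * indicator E x"
    using assms(3,4) by eventually_elim (auto simp: indicator_def)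
  then have "expectation X \<le> expectation (\<lambda>x. B - (B - b) * indicator E x)"
    using assms(1) indicator by (intro integral_mono_AE) auto
  also have "\<dots> = B - (B - b) * prob E"
    using indicator assms(2) by (simp add: prob_space)
  finally show ?thesis .
qed


lemma length_mucb_history [simp]: "length (mucb_history K M \<omega> t) = t"
  by (induction t) auto

lemma length_if_in_tuples: "a \<in> tuples K M \<Longrightarrow> length a = M"
  by (simp add: tuples_def)

lemma finite_tuples: "finite (tuples K M)"
proof -
  have "set a \<subseteq> {..(\<Sum>i<M. K i)}" if a: "a \<in> tuples K M" for a
  proof
    fix x assume "x \<in> set a"
    then obtain i where "i < M" "x = a ! i"
      using a by (auto simp: tuples_def in_set_conv_nth)
    then have "x \<le> K i" using a by (simp add: tuples_def)
    also have "K i \<le> (\<Sum>i<M. K i)"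
      using \<open>i < M\<close> by (simp add: member_le_sum)
    finally show "x \<in> {..(\<Sum>i<M. K i)}" by simp
  qed
  then have "tuples K M \<subseteq> {xs. set xs \<subseteq> {..(\<Sum>i<M. K i)} \<and> length xs = M}"
    by (auto simp: length_if_in_tuples)
  then show ?thesis
    by (rule finite_subset) (rule finite_lists_length_eq[OF finite_atMost])
qed

lemma diagonal_in_tuples:
  "(\<And>i. i < M \<Longrightarrow> g i \<in> tuples K M) \<Longrightarrow> map (\<lambda>i. g i ! i) [0..<M] \<in> tuples K M"
  by (simp add: tuples_def)

lemma own_mean_single_play:
  assumes "p < length h" "h ! p = a" "play_count h a = 1"
  shows "own_mean \<omega> i h a = \<omega> (i, Suc p, a)"
proof -
  have "card {s. s < length h \<and> h ! s = a} = 1"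
    using assms(3) by (simp add: play_count_def length_filter_conv_card)
  then obtain q where "{s. s < length h \<and> h ! s = a} = {q}"
    by (rule card_1_singletonE)
  moreover have "p \<in> {s. s < length h \<and> h ! s = a}"
    using assms(1,2) by simp
  ultimately have p: "{s \<in> {..<length h}. h ! s = a} = {p}"
    unfolding lessThan_iff by (metis singletonD)
  have "(\<Sum>s<length h. if h ! s = a then \<omega> (i, Suc s, a) else 0)
          = (\<Sum>s\<in>{s \<in> {..<length h}. h ! s = a}. \<omega> (i, Suc s, a))"
    by (rule sum.inter_filter[symmetric]) simp
  also have "\<dots> = \<omega> (i, Suc p, a)"
    unfolding p by simp
  finally show ?thesis
    by (simp add: own_mean_def assms(3))
qed

lemma own_mean_eq_0:
  "(\<And>s. s < length h \<Longrightarrow> h ! s = a \<Longrightarrow> \<omega> (i, Suc s, a) = 0) \<Longrightarrow> own_mean \<omega> i h a = 0"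
  by (auto simp: own_mean_def intro!: sum.neutral)

locale bandit_instance =
  fixes K :: "nat \<Rightarrow> nat" and M :: nat and F :: "nat list \<Rightarrow> real measure"
  assumes arms_pos: "\<And>i. i < M \<Longrightarrow> 1 \<le> K i"
    and prob_space_F: "\<And>a. a \<in> tuples K M \<Longrightarrow> prob_space (F a)"
    and sets_F: "\<And>a. a \<in> tuples K M \<Longrightarrow> sets (F a) = sets borel"
    and F_unit_interval: "\<And>a. a \<in> tuples K M \<Longrightarrow> AE x in F a. 0 \<le> x \<and> x \<le> 1"
begin

lemma tuples_nonempty: "tuples K M \<noteq> {}"
proof -
  have "replicate M 1 \<in> tuples K M"
    using arms_pos by (simp add: tuples_def)
  then show ?thesis by blast
qed

lemma init_tuple_in_tuples: "init_tuple K M r \<in> tuples K M"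
proof -
  have "x mod K i + 1 \<le> K i" if "i < M" for x i
    using arms_pos[OF that] by (simp add: Suc_leI)
  then show ?thesis
    by (simp add: tuples_def init_tuple_def)
qed

lemma next_tuple_in_tuples: "next_tuple K M \<omega> h \<in> tuples K M"
proof -
  have "lex_argmax (tuples K M) f \<in> tuples K M" for f
    using lex_argmax_first_maximiser[OF finite_tuples tuples_nonempty, of M] by (simp add: length_if_in_tuples)
  then show ?thesis
    by (simp add: next_tuple_def init_tuple_in_tuples diagonal_in_tuples)
qed

lemma set_mucb_history: "set (mucb_history K M \<omega> t) \<subseteq> tuples K M"
  by (induction t) (auto simp: next_tuple_in_tuples)

lemma measurable_reward_component [measurable]:
  "(\<lambda>\<omega>. \<omega> j) \<in> borel_measurable (reward_space K M F T)"
proof (cases "j \<in> {..<M} \<times> {1..T} \<times> tuples K M")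
  case True
  then have "sets ((\<lambda>(i, s, a). F a) j) = sets borel"
    using sets_F by auto
  moreover have "(\<lambda>\<omega>. \<omega> j) \<in> measurable (reward_space K M F T) ((\<lambda>(i, s, a). F a) j)"
    unfolding reward_space_def using True by (rule measurable_component_singleton)
  ultimately show ?thesis
    by (simp cong: measurable_cong_sets)
next
  case False
  then have "\<omega> j = undefined" if "\<omega> \<in> space (reward_space K M F T)" for \<omega>
    using that unfolding reward_space_def space_PiM by (cases j) (auto simp: PiE_def extensional_def)
  then show ?thesis
    by (subst measurable_cong[where g = "\<lambda>_. undefined"]) auto
qed

lemma measurable_mucb_index [measurable]:
  "(\<lambda>\<omega>. mucb_index \<omega> i h a) \<in> borel_measurable (reward_space K M F T)"
  unfolding mucb_index_def own_mean_def by measurable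

lemma measurable_next_tuple:
  "(\<lambda>\<omega>. next_tuple K M \<omega> h) \<in> measurable (reward_space K M F T) (count_space UNIV)"
proof -
  have "(\<lambda>\<omega>. lex_argmax (tuples K M) (mucb_index \<omega> i h)) \<in> measurable (reward_space K M F T) (count_space UNIV)" for i
    by (rule measurable_lex_argmax[OF finite_tuples tuples_nonempty length_if_in_tuples]) measurable
  then have "(\<lambda>\<omega>. map (\<lambda>i. lex_argmax (tuples K M) (mucb_index \<omega> i h) ! i) [0..<M])
               \<in> measurable (reward_space K M F T) (count_space UNIV)"
    by (intro measurable_map_count_space measurable_compose[OF _ measurable_count_space])
  then show ?thesis
    by (simp add: next_tuple_def)
qed

lemma measurable_mucb_history:
  "(\<lambda>\<omega>. mucb_history K M \<omega> t) \<in> measurable (reward_space K M F T) (count_space UNIV)"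
proof (induction t)
  case 0
  then show ?case by simp
next
  case (Suc t)
  have "(\<lambda>\<omega>. h @ [next_tuple K M \<omega> h]) \<in> measurable (reward_space K M F T) (count_space UNIV)" for h
    by (rule measurable_compose[OF measurable_next_tuple]) simp
  then have "(\<lambda>\<omega>. (\<lambda>h \<omega>. h @ [next_tuple K M \<omega> h]) (mucb_history K M \<omega> t) \<omega>)
               \<in> measurable (reward_space K M F T) (count_space UNIV)"
    by (rule measurable_compose_countable[OF _ Suc.IH])
  then show ?case by simp
qed

lemma measurable_reward_sum [measurable]:
  "(\<lambda>\<omega>. reward_sum K M \<omega> i T) \<in> borel_measurable (reward_space K M F T)"
proof -
  have "(\<lambda>\<omega>. (\<lambda>h \<omega>. \<Sum>s<T. \<omega> (i, Suc s, h ! s)) (mucb_history K M \<omega> T) \<omega>)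
          \<in> borel_measurable (reward_space K M F T)"
    by (rule measurable_compose_countable[OF _ measurable_mucb_history]) measurable
  then show ?thesis
    by (simp add: reward_sum_def)
qed

lemma prob_space_reward_space: "prob_space (reward_space K M F T)"
  unfolding reward_space_def by (rule prob_space_PiM) (auto intro: prob_space_F)

lemma AE_reward_space:
  assumes "\<And>a. a \<in> tuples K M \<Longrightarrow> AE x in F a. P a x"
  shows "AE \<omega> in reward_space K M F T. \<forall>i<M. \<forall>s\<in>{1..T}. \<forall>a\<in>tuples K M. P a (\<omega> (i, s, a))"
proof -
  let ?I = "{..<M} \<times> {1..T} \<times> tuples K M"
  have "AE \<omega> in reward_space K M F T. \<forall>j\<in>?I. (case j of (i, s, a) \<Rightarrow> P a (\<omega> j))"
  proof (rule AE_finite_allI)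
    show "finite ?I" by (simp add: finite_tuples)
  next
    fix j assume "j \<in> ?I"
    then show "AE \<omega> in reward_space K M F T. case j of (i, s, a) \<Rightarrow> P a (\<omega> j)"
      unfolding reward_space_def
      by (cases j) (auto intro!: AE_PiM_component prob_space_F assms)
  qed
  then show ?thesis
    by eventually_elim auto
qed

lemma reward_sum_bounds:
  assumes "\<forall>i<M. \<forall>s\<in>{1..T}. \<forall>a\<in>tuples K M. 0 \<le> \<omega> (i, s, a) \<and> \<omega> (i, s, a) \<le> 1" "i < M"
  shows "0 \<le> reward_sum K M \<omega> i T \<and> reward_sum K M \<omega> i T \<le> T"
proof -
  have "mucb_history K M \<omega> T ! s \<in> tuples K M" if "s < T" for s
    using set_mucb_history[of \<omega> T] that by (simp add: subset_iff)
  then have "0 \<le> \<omega> (i, Suc s, mucb_history K M \<omega> T ! s) \<and> \<omega> (i, Suc s, mucb_history K M \<omega> T ! s) \<le> 1"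
    if "s < T" for s
    using assms that by simp
  moreover from this have "reward_sum K M \<omega> i T \<le> of_nat (card {..<T}) * 1"
    unfolding reward_sum_def by (intro sum_bounded_above) simp
  ultimately show ?thesis
    unfolding reward_sum_def by (auto intro: sum_nonneg)
qed

lemma AE_reward_sum_bounds:
  assumes "i < M"
  shows "AE \<omega> in reward_space K M F T. 0 \<le> reward_sum K M \<omega> i T \<and> reward_sum K M \<omega> i T \<le> T"
proof -
  have "AE \<omega> in reward_space K M F T. \<forall>i<M. \<forall>s\<in>{1..T}. \<forall>a\<in>tuples K M. 0 \<le> \<omega> (i, s, a) \<and> \<omega> (i, s, a) \<le> 1"
    by (rule AE_reward_space) (rule F_unit_interval)
  then show ?thesis
    by eventually_elim (use reward_sum_bounds assms in auto)
qed

lemma integrable_reward_sum: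
  assumes "i < M"
  shows "integrable (reward_space K M F T) (\<lambda>\<omega>. reward_sum K M \<omega> i T)"
proof -
  interpret prob_space "reward_space K M F T" by (rule prob_space_reward_space)
  show ?thesis
  proof (rule integrable_const_bound[where B = T])
    show "AE \<omega> in reward_space K M F T. norm (reward_sum K M \<omega> i T) \<le> T"
      using AE_reward_sum_bounds[OF assms] by eventually_elim auto
  qed simp
qed

end


section \<open>An instance on which mUCB is trapped\<close>

definition trap_pmf :: "nat list \<Rightarrow> real pmf" where
  "trap_pmf a = (if a = [1, 1] then return_pmf 0 else if a = [1, 2] then pmf_of_set {0, 1} else return_pmf 1)"

definition trap_dist :: "nat list \<Rightarrow> real measure" where
  "trap_dist a = pmf_borel (trap_pmf a)"

lemma set_pmf_trap_pmf:
  "set_pmf (trap_pmf a) = (if a = [1, 1] then {0} else if a = [1, 2] then {0, 1} else {1})"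
  by (simp add: trap_pmf_def)

lemma trap_dist_unit_interval: "AE x in trap_dist a. 0 \<le> x \<and> x \<le> 1"
  using AE_pmf_borel[of "trap_pmf a"] unfolding trap_dist_def
  by eventually_elim (auto simp: set_pmf_trap_pmf split: if_splits)

lemma arm_mean_trap_dist:
  "arm_mean (trap_dist a) = (if a = [1, 1] then 0 else if a = [1, 2] then 1 / 2 else 1)"
  by (simp add: trap_dist_def arm_mean_pmf_borel trap_pmf_def integral_pmf_of_set)

lemma tuples_two_arms: "tuples (\<lambda>_. 2) 2 = {[1, 1], [1, 2], [2, 1], [2, 2]}"
proof (intro set_eqI iffI)
  fix a assume a: "a \<in> tuples (\<lambda>_. 2) 2"
  then obtain x y where xy: "a = [x, y]"
    by (auto simp: tuples_def numeral_2_eq_2 length_Suc_conv)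
  have "1 \<le> x" "x \<le> 2" "1 \<le> y" "y \<le> 2"
    using a unfolding tuples_def xy by (auto dest: spec[of _ 0] spec[of _ 1])
  then have "x = 1 \<or> x = 2" "y = 1 \<or> y = 2" by arith+
  then show "a \<in> {[1, 1], [1, 2], [2, 1], [2, 2]}" using xy by auto
qed (auto simp: tuples_def less_2_cases_iff)

lemma mu_star_trap_dist: "mu_star (\<lambda>_. 2) 2 trap_dist = 1"
  by (simp add: mu_star_def tuples_two_arms arm_mean_trap_dist)

interpretation trap: bandit_instance "\<lambda>_. 2" 2 trap_dist
  using trap_dist_unit_interval
  by (intro bandit_instance.intro) (simp_all add: trap_dist_def prob_space_pmf_borel)

abbreviation initial_rounds :: "nat list list" where
  "initial_rounds \<equiv> [[1, 1], [1, 2], [2, 1], [2, 2]]"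

lemma init_tuple_two_arms: "init_tuple (\<lambda>_. 2) 2 r = [((r - 1) div 2) mod 2 + 1, (r - 1) mod 2 + 1]"
proof -
  have "{0::nat<..<2} = {1}" "{1::nat<..<2} = {}" by auto
  then show ?thesis
    by (simp add: init_tuple_def upt_rec)
qed

lemma mucb_history_two_arms_initial:
  "t \<le> 4 \<Longrightarrow> mucb_history (\<lambda>_. 2) 2 \<omega> t = take t initial_rounds"
proof (induction t)
  case 0
  then show ?case by simp
next
  case (Suc t)
  have "n_init (\<lambda>_. 2) 2 = 4"
    by (simp add: n_init_def numeral_2_eq_2)
  moreover have "t = 0 \<or> t = 1 \<or> t = 2 \<or> t = 3"
    using Suc.prems by arith
  ultimately show ?case
    using Suc by (auto simp: next_tuple_def init_tuple_two_arms)
qed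

definition trap_supported :: "nat \<Rightarrow> (nat \<times> nat \<times> nat list \<Rightarrow> real) \<Rightarrow> bool" where
  "trap_supported T \<omega> \<longleftrightarrow>
     (\<forall>i<2. \<forall>s\<in>{1..T}. \<forall>a\<in>tuples (\<lambda>_. 2) 2. \<omega> (i, s, a) \<in> set_pmf (trap_pmf a))"

lemma AE_trap_supported: "AE \<omega> in reward_space (\<lambda>_. 2) 2 trap_dist T. trap_supported T \<omega>"
  unfolding trap_supported_def by (rule trap.AE_reward_space) (unfold trap_dist_def, rule AE_pmf_borel)

lemma mucb_index_trapped:
  assumes "trap_supported T \<omega>" "i < 2" "n + 4 \<le> T"
  defines "h \<equiv> initial_rounds @ replicate n [1, 1]"
    and "r \<equiv> sqrt (2 * ln (1 / mucb_delta (n + 4)))"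
  shows "mucb_index \<omega> i h [1, 1] \<le> ereal r"
    and "mucb_index \<omega> i h [1, 2] = ereal (\<omega> (i, 2, [1, 2]) + r)"
    and "mucb_index \<omega> i h [2, 1] = ereal (1 + r)"
    and "mucb_index \<omega> i h [2, 2] = ereal (1 + r)"
proof -
  have reward: "\<omega> (i, s, a) \<in> set_pmf (trap_pmf a)" if "1 \<le> s" "s \<le> n + 4" "a \<in> tuples (\<lambda>_. 2) 2" for s a
    using assms(1-3) that unfolding trap_supported_def by auto
  have length_h: "length h = n + 4"
    by (simp add: h_def)
  have play_count: "play_count h a = (if a = [1, 1] then n + 1 else 1)" if "a \<in> tuples (\<lambda>_. 2) 2" for a
    using that by (auto simp: h_def play_count_def tuples_two_arms filter_replicate)
  have "own_mean \<omega> i h [1, 1] = 0"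
    using reward[of _ "[1, 1]"] length_h
    by (intro own_mean_eq_0) (auto simp: tuples_two_arms set_pmf_trap_pmf)
  moreover have "L / real (n + 1) \<le> L" if "0 \<le> L" for L :: real
    using that by (simp add: divide_le_eq algebra_simps)
  ultimately show "mucb_index \<omega> i h [1, 1] \<le> ereal r"
    by (simp add: mucb_index_def play_count tuples_two_arms length_h r_def mucb_delta_def)
  have "own_mean \<omega> i h [1, 2] = \<omega> (i, Suc 1, [1, 2])"
    by (rule own_mean_single_play) (simp add: length_h, simp add: h_def, simp add: play_count tuples_two_arms)
  then have "own_mean \<omega> i h [1, 2] = \<omega> (i, 2, [1, 2])"
    by (simp only: Suc_1)
  then show "mucb_index \<omega> i h [1, 2] = ereal (\<omega> (i, 2, [1, 2]) + r)"
    by (simp add: mucb_index_def play_count tuples_two_arms length_h r_def)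
  have "own_mean \<omega> i h [2, 1] = \<omega> (i, Suc 2, [2, 1])"
    by (rule own_mean_single_play) (simp add: length_h, simp add: h_def, simp add: play_count tuples_two_arms)
  also have "\<dots> = 1"
    using reward[of 3 "[2, 1]"] by (simp add: tuples_two_arms set_pmf_trap_pmf)
  finally show "mucb_index \<omega> i h [2, 1] = ereal (1 + r)"
    by (simp add: mucb_index_def play_count tuples_two_arms length_h r_def)
  have "own_mean \<omega> i h [2, 2] = \<omega> (i, Suc 3, [2, 2])"
    by (rule own_mean_single_play) (simp add: length_h, simp add: h_def, simp add: play_count tuples_two_arms)
  also have "\<dots> = 1"
    using reward[of 4 "[2, 2]"] by (simp add: tuples_two_arms set_pmf_trap_pmf)
  finally show "mucb_index \<omega> i h [2, 2] = ereal (1 + r)"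
    by (simp add: mucb_index_def play_count tuples_two_arms length_h r_def)
qed

lemma next_tuple_trapped:
  assumes "trap_supported T \<omega>" "\<omega> (0, 2, [1, 2]) = 1" "\<omega> (1, 2, [1, 2]) = 0" "n + 4 \<le> T"
  shows "next_tuple (\<lambda>_. 2) 2 \<omega> (initial_rounds @ replicate n [1, 1]) = [1, 1]"
proof -
  let ?h = "initial_rounds @ replicate n [1, 1]"
  define r where "r = sqrt (2 * ln (1 / mucb_delta (n + 4)))"
  note index = mucb_index_trapped[OF assms(1) _ assms(4), folded r_def]
  have index_11: "mucb_index \<omega> i ?h [1, 1] < ereal (1 + r)" if "i < 2" for i
    using index(1)[OF that] by (simp add: le_less_trans)
  \<comment> \<open>Player 0 breaks its three-way tie towards [1, 2], player 1 picks [2, 1]: both play arm 1.\<close>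
  note eqI = lex_argmax_eqI[where A = "tuples (\<lambda>_. 2) 2" and n = 2, OF finite_tuples length_if_in_tuples[of _ "\<lambda>_. 2"]]
  have "lex_argmax (tuples (\<lambda>_. 2) 2) (mucb_index \<omega> 0 ?h) = [1, 2]"
    by (rule eqI) (use index[of 0] index_11[of 0] assms(2) in \<open>auto simp: tuples_two_arms\<close>)
  moreover have "lex_argmax (tuples (\<lambda>_. 2) 2) (mucb_index \<omega> 1 ?h) = [2, 1]"
    by (rule eqI) (use index[of 1] index_11[of 1] assms(3) in \<open>auto simp: tuples_two_arms\<close>)
  moreover have "n_init (\<lambda>_. 2) 2 = 4"
    by (simp add: n_init_def numeral_2_eq_2)
  ultimately show ?thesis
    by (simp add: next_tuple_def upt_rec)
qed

lemma mucb_history_trapped: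
  assumes "trap_supported T \<omega>" "\<omega> (0, 2, [1, 2]) = 1" "\<omega> (1, 2, [1, 2]) = 0"
  shows "n + 4 \<le> T \<Longrightarrow> mucb_history (\<lambda>_. 2) 2 \<omega> (n + 4) = initial_rounds @ replicate n [1, 1]"
proof (induction n)
  case 0
  then show ?case
    using mucb_history_two_arms_initial[of 4] by simp
next
  case (Suc n)
  have "mucb_history (\<lambda>_. 2) 2 \<omega> (Suc n + 4)
          = mucb_history (\<lambda>_. 2) 2 \<omega> (n + 4) @ [next_tuple (\<lambda>_. 2) 2 \<omega> (mucb_history (\<lambda>_. 2) 2 \<omega> (n + 4))]"
    by (simp only: add_Suc mucb_history.simps)
  also have "\<dots> = (initial_rounds @ replicate n [1, 1]) @ [[1, 1]]"
    using Suc next_tuple_trapped[OF assms] by simp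
  finally show ?case
    by (simp add: replicate_append_same)
qed

lemma reward_sum_trapped:
  assumes "trap_supported T \<omega>" "\<omega> (0, 2, [1, 2]) = 1" "\<omega> (1, 2, [1, 2]) = 0" "4 \<le> T" "i < 2"
  shows "reward_sum (\<lambda>_. 2) 2 \<omega> i T \<le> 4"
proof -
  let ?h = "mucb_history (\<lambda>_. 2) 2 \<omega> T"
  let ?reward = "\<lambda>s. \<omega> (i, Suc s, ?h ! s)"
  have history: "?h = initial_rounds @ replicate (T - 4) [1, 1]"
    using mucb_history_trapped[OF assms(1-3), of "T - 4"] assms(4) by simp
  have reward_values: "?reward s \<in> set_pmf (trap_pmf (?h ! s))" if "s < T" for s
  proof -
    have "?h ! s \<in> tuples (\<lambda>_. 2) 2"
      using trap.set_mucb_history[of \<omega> T] that by (simp add: subset_iff)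
    then show ?thesis
      using assms(1,5) that unfolding trap_supported_def by simp
  qed
  have "?reward s = 0" if "4 \<le> s" "s < T" for s
  proof -
    have "?h ! s = [1, 1]"
      using that by (simp add: history nth_append)
    then show ?thesis
      using reward_values[OF that(2)] by (simp add: set_pmf_trap_pmf)
  qed
  then have "(\<Sum>s\<in>{4..<T}. ?reward s) = 0"
    by simp
  moreover have "?reward s \<le> 1" if "s < T" for s
    using reward_values[OF that] by (auto simp: set_pmf_trap_pmf split: if_splits)
  then have "(\<Sum>s<4. ?reward s) \<le> (\<Sum>s<4::nat. 1)"
    using assms(4) by (intro sum_mono) simp
  moreover have "reward_sum (\<lambda>_. 2) 2 \<omega> i T = (\<Sum>s<4. ?reward s) + (\<Sum>s\<in>{4..<T}. ?reward s)"
    unfolding reward_sum_def lessThan_atLeast0 using assms(4) by (simp add: sum.atLeastLessThan_concat)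
  ultimately show ?thesis by simp
qed

definition trap_event :: "nat \<Rightarrow> (nat \<times> nat \<times> nat list \<Rightarrow> real) set" where
  "trap_event T = {\<omega> \<in> space (reward_space (\<lambda>_. 2) 2 trap_dist T). \<omega> (0, 2, [1, 2]) = 1 \<and> \<omega> (1, 2, [1, 2]) = 0}"

lemma prob_trap_event:
  assumes "2 \<le> T"
  shows "measure (reward_space (\<lambda>_. 2) 2 trap_dist T) (trap_event T) = 1 / 4"
proof -
  let ?I = "{..<2} \<times> {1..T} \<times> tuples (\<lambda>_. 2) 2"
  let ?M = "\<lambda>(i :: nat, s :: nat, a). trap_dist a"
  have coin: "measure (trap_dist [1, 2]) {0} = 1 / 2" "measure (trap_dist [1, 2]) {1} = 1 / 2"
    by (simp_all add: trap_dist_def measure_pmf_borel_singleton trap_pmf_def)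
  have "measure (PiM ?I ?M) {\<omega> \<in> space (PiM ?I ?M). \<omega> (0, 2, [1, 2]) \<in> {1} \<and> \<omega> (1, 2, [1, 2]) \<in> {0}}
          = measure (?M (0, 2, [1, 2])) {1} * measure (?M (1, 2, [1, 2])) {0}"
  proof (rule measure_PiM_two_components)
    show "prob_space (?M k)" for k
      by (cases k) (simp add: trap_dist_def prob_space_pmf_borel)
  qed (use assms in \<open>auto simp: tuples_two_arms trap_dist_def\<close>)
  also have "\<dots> = 1 / 2 * (1 / 2)"
    by (simp only: prod.case coin)
  finally show ?thesis
    unfolding reward_space_def trap_event_def by simp
qed

lemma expected_regret_trap_dist:
  assumes "4 \<le> T" "i < 2"
  shows "(real T - 4) / 4 \<le> expected_regret (\<lambda>_. 2) 2 trap_dist i T"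
proof -
  let ?P = "reward_space (\<lambda>_. 2) 2 trap_dist T"
  let ?E = "trap_event T"
  interpret prob_space ?P
    by (rule trap.prob_space_reward_space)
  have "prob ?E = 1 / 4"
    using assms(1) by (intro prob_trap_event) simp
  have "(\<integral>\<omega>. reward_sum (\<lambda>_. 2) 2 \<omega> i T \<partial>?P) \<le> real T - (real T - 4) * prob ?E"
  proof (rule expectation_le_if_small_on_event)
    show "integrable ?P (\<lambda>\<omega>. reward_sum (\<lambda>_. 2) 2 \<omega> i T)"
      using assms(2) by (rule trap.integrable_reward_sum)
    show "?E \<in> events"
      unfolding trap_event_def by measurable
    show "AE \<omega> in ?P. reward_sum (\<lambda>_. 2) 2 \<omega> i T \<le> T"
      using trap.AE_reward_sum_bounds[OF assms(2)] by eventually_elim simp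
    show "AE \<omega> in ?P. \<omega> \<in> ?E \<longrightarrow> reward_sum (\<lambda>_. 2) 2 \<omega> i T \<le> 4"
      using AE_trap_supported by eventually_elim (use reward_sum_trapped assms in \<open>auto simp: trap_event_def\<close>)
  qed (use assms in simp)
  then show ?thesis
    unfolding \<open>prob ?E = 1 / 4\<close> expected_regret_def mu_star_trap_dist by linarith
qed

theorem theorem4:
  shows "\<exists>(M::nat) (K::nat \<Rightarrow> nat) (F::nat list \<Rightarrow> real measure).
           M \<ge> 1 \<and> (\<forall>i<M. K i \<ge> 1) \<and>
           (\<forall>a\<in>tuples K M. prob_space (F a) \<and> sets (F a) = sets borel \<and>
               (AE x in F a. 0 \<le> x \<and> x \<le> 1) \<and> one_subgaussian (F a)) \<and>
           (\<exists>c>0. \<exists>T0. \<forall>T\<ge>T0. \<forall>i<M.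
               integrable (reward_space K M F T) (\<lambda>\<omega>. reward_sum K M \<omega> i T) \<and>
               expected_regret K M F i T \<ge> c * real T)"
proof (rule exI[of _ 2], rule exI[of _ "\<lambda>_. 2"], rule exI[of _ trap_dist], intro conjI ballI)
  fix a
  show "prob_space (trap_dist a)" "sets (trap_dist a) = sets borel"
    by (simp_all add: trap_dist_def prob_space_pmf_borel)
  show "AE x in trap_dist a. 0 \<le> x \<and> x \<le> 1"
    by (rule trap_dist_unit_interval)
  then show "one_subgaussian (trap_dist a)"
    by (intro one_subgaussian_if_AE_interval[where a = 0 and b = 1])
       (auto simp: trap_dist_def prob_space_pmf_borel)
next
  have "1 / 8 * real T \<le> expected_regret (\<lambda>_. 2) 2 trap_dist i T" if "8 \<le> T" "i < 2" for T i
    using expected_regret_trap_dist[of T i] that by simp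
  then show "\<exists>c>0. \<exists>T0. \<forall>T\<ge>T0. \<forall>i<2.
      integrable (reward_space (\<lambda>_. 2) 2 trap_dist T) (\<lambda>\<omega>. reward_sum (\<lambda>_. 2) 2 \<omega> i T) \<and>
      c * real T \<le> expected_regret (\<lambda>_. 2) 2 trap_dist i T"
    using trap.integrable_reward_sum by (intro exI[of _ "1 / 8"] exI[of _ 8]) auto
qed simp_all

end
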